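(* Let $(G,t)$ be an infinite biosphere. Then: (1) $\mathrm{CONV}$ is upward generic; (2) $\mathrm{CA}$ is upward generic; (3) $\mathrm{REF}$ is upward generic; (4) $\mathrm{IAP}\cap\mathrm{CONV}\cap\mathrm{CA}\cap\mathrm{REF}$ is upward generic.
   Context: An infinite biosphere is a directed graph $G$ together with a function $t$ assigning a real number $t(v)$ to each vertex, such that: (1) if $v$ is a parent of $w$ (edge from $v$ to $w$) then $t(v)<t(w)$; (2) for every $r\in\mathbb R$ at most finitely many vertices $v$ have $t(v)<r$; (3) every vertex has finitely many children; (4) $G$ is infinite. $v$ is an ancestor of $w$ (and $w$ a descendant of $v$) if there is a directed path $v=v_1,\dots,v_n=w$ with $n>1$. A $G$-subset is a set of vertices. Define the following sets of $G$-subsets: $\mathrm{IAP}$: those $S$ such that no $v\in S$ has both infinitely many descendants in $S$ and infinitely many non-descendants in $S$ (identical ancestor point axiom). $\mathrm{CONV}$: those $S$ such that every $v\in G$ having an ancestor in $S$ and a descendant in $S$ lies in $S$. $\mathrm{CA}$: those $S$ for which there exists $v\in S$ such that every $w\in S$ with $w\neq v$ is a descendant of $v$ (common ancestor property). $\mathrm{REF}$: those $S$ such that every $v\in S$ which has infinitely many descendants in $G$ has infinitely many descendants in $S$ (reflection property). For a nonempty linear order $(X,<)$, an ascending chain of $G$-subsets indexed by $X$ is a family $\{C_\alpha\}_{\alpha\in X}$ with $C_\alpha\subseteq C_\beta$ whenever $\alpha<\beta$. A set $T$ of $G$-subsets is upward generic if for every ascending chain $\{C_\alpha\}_{\alpha\in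 X}$ of nonempty $G$-subsets with each $C_\alpha\in T$, $\bigcup_\alpha C_\alpha\in T$. *)

theory Defs
  imports Complex_Main
begin

text \<open>A directed graph on the vertex type 'v is given by its edge relation E
  (E v w means: v is a parent of w). The vertex set is UNIV.\<close>

definition infinite_biosphere :: "('v \<Rightarrow> 'v \<Rightarrow> bool) \<Rightarrow> ('v \<Rightarrow> real) \<Rightarrow> bool" where
  "infinite_biosphere E t \<longleftrightarrow>
     (\<forall>v w. E v w \<longrightarrow> t v < t w) \<and>
     (\<forall>r::real. finite {v. t v < r}) \<and>
     (\<forall>v. finite {w. E v w}) \<and>
     infinite (UNIV :: 'v set)"

definition descendant :: "('v \<Rightarrow> 'v \<Rightarrow> bool) \<Rightarrow> 'v \<Rightarrow> 'v \<Rightarrow> bool" where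
  "descendant E v w \<longleftrightarrow> E\<^sup>+\<^sup>+ v w"

definition IAP :: "('v \<Rightarrow> 'v \<Rightarrow> bool) \<Rightarrow> 'v set set" where
  "IAP E = {S. \<not> (\<exists>v\<in>S. infinite {w\<in>S. descendant E v w}
                      \<and> infinite {w\<in>S. \<not> descendant E v w})}"

definition CONV :: "('v \<Rightarrow> 'v \<Rightarrow> bool) \<Rightarrow> 'v set set" where
  "CONV E = {S. \<forall>v. (\<exists>a\<in>S. descendant E a v) \<and> (\<exists>d\<in>S. descendant E v d) \<longrightarrow> v \<in> S}"

definition CA :: "('v \<Rightarrow> 'v \<Rightarrow> bool) \<Rightarrow> 'v set set" where
  "CA E = {S. \<exists>v\<in>S. \<forall>w\<in>S. w \<noteq> v \<longrightarrow> descendant E v w}"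

definition REF :: "('v \<Rightarrow> 'v \<Rightarrow> bool) \<Rightarrow> 'v set set" where
  "REF E = {S. \<forall>v\<in>S. infinite {w. descendant E v w} \<longrightarrow> infinite {w\<in>S. descendant E v w}}"

text \<open>Upward genericity, for chains indexed by a (nonempty, as every HOL type is)
  linearly ordered index type 'i. The theorem quantifies over all such 'i.\<close>
definition upward_generic_idx :: "'i::linorder itself \<Rightarrow> 'v set set \<Rightarrow> bool" where
  "upward_generic_idx _ T \<longleftrightarrow>
     (\<forall>C :: 'i \<Rightarrow> 'v set.
        (\<forall>\<alpha> \<beta>. \<alpha> < \<beta> \<longrightarrow> C \<alpha> \<subseteq> C \<beta>) \<longrightarrow>
        (\<forall>\<alpha>. C \<alpha> \<noteq> {} \<and> C \<alpha> \<in> T) \<longrightarrow>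
        (\<Union>\<alpha>. C \<alpha>) \<in> T)"

end

theory Submission
  imports Defs
begin

(* Unions of chains preserve convexity and reflection directly. For the common ancestor
   property, take a root r of a member with t r minimal among all roots of members; it
   exists because t has finite sublevel sets. In every later member the root is r, since
   any other root would be a proper ancestor of r and hence have smaller t. So r is the
   root of the union.
   For the identical ancestor point axiom, let v lie in a member S late enough to have
   root r. If v has infinitely many descendants, reflection and the axiom in S leave only
   finitely many non-descendants of v in S. A vertex of the union with infinitely many
   descendants already lies in S, by convexity between r and one of its descendants in S.
   Hence a non-descendant of v in the union but outside S is, or lies below, a child of
   finite progeny of a non-descendant of v in S, and by finite branching there are only
   finitely many such vertices. *)

definition is_root :: "('v \<Rightarrow> 'v \<Rightarrow> bool) \<Rightarrow> 'v set \<Rightarrow> 'v \<Rightarrow> bool" where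
  "is_root E S r \<longleftrightarrow> r \<in> S \<and> (\<forall>w\<in>S. w \<noteq> r \<longrightarrow> descendant E r w)"

lemma is_root_mem: "is_root E S r \<Longrightarrow> r \<in> S"
  unfolding is_root_def by blast

lemma is_root_descendant: "is_root E S r \<Longrightarrow> w \<in> S \<Longrightarrow> w \<noteq> r \<Longrightarrow> descendant E r w"
  unfolding is_root_def by blast

lemma CA_iff_ex_root: "S \<in> CA E \<longleftrightarrow> (\<exists>r. is_root E S r)"
  unfolding CA_def is_root_def by blast

lemma descendant_if_edge: "E x y \<Longrightarrow> descendant E x y"
  unfolding descendant_def by blast

lemma descendant_trans: "descendant E x y \<Longrightarrow> descendant E y z \<Longrightarrow> descendant E x z"
  unfolding descendant_def by (rule tranclp_trans)

lemma descendant_edge_trans: "E x y \<Longrightarrow> y = z \<or> descendant E y z \<Longrightarrow> descendant E x z"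
  unfolding descendant_def by (auto intro: tranclp_into_tranclp2)

lemma descendant_exits_set:
  assumes "descendant E a w" "a \<in> S" "w \<notin> S"
  shows "\<exists>x y. x \<in> S \<and> y \<notin> S \<and> E x y \<and> (y = w \<or> descendant E y w)"
proof -
  have "E\<^sup>+\<^sup>+ a w" using assms(1) unfolding descendant_def .
  then show ?thesis using assms(3)
  proof (induction rule: tranclp_induct)
    case (base y)
    then show ?case using assms(2) by blast
  next
    case (step y z)
    show ?case
    proof (cases "y \<in> S")
      case True
      then show ?thesis using step.hyps(2) step.prems by blast
    next
      case False
      then obtain x y' where "x \<in> S" "y' \<notin> S" "E x y'" "y' = y \<or> descendant E y' y"
        using step.IH by blast
      moreover have "descendant E y' z"
        using calculation(4) step.hyps(2) unfolding descendant_def by auto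
      ultimately show ?thesis by blast
    qed
  qed
qed

lemma biosphere_descendant_less:
  assumes "infinite_biosphere E t" "descendant E v w"
  shows "t v < t w"
proof -
  have edge: "E a b \<Longrightarrow> t a < t b" for a b
    using assms(1) unfolding infinite_biosphere_def by blast
  have "E\<^sup>+\<^sup>+ v w" using assms(2) unfolding descendant_def .
  then show ?thesis
    by (induction rule: tranclp_induct) (auto dest: edge)
qed

lemma biosphere_obtain_t_minimal:
  assumes "infinite_biosphere E t" "x \<in> S"
  obtains m where "m \<in> S" "\<And>y. y \<in> S \<Longrightarrow> t m \<le> t y"
proof -
  let ?A = "{y \<in> S. t y \<le> t x}"
  have "finite {v. t v < t x + 1}" using assms(1) unfolding infinite_biosphere_def by blast
  then have fin: "finite ?A" by (rule finite_subset[rotated]) auto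
  moreover have "x \<in> ?A" using assms(2) by simp
  ultimately have "Min (t ` ?A) \<in> t ` ?A" by (intro Min_in) auto
  then obtain m where m: "m \<in> ?A" "t m = Min (t ` ?A)" by auto
  show ?thesis
  proof (rule that)
    show "m \<in> S" using m(1) by simp
    fix y
    assume "y \<in> S"
    show "t m \<le> t y"
    proof (cases "t y \<le> t x")
      case True
      then show ?thesis using m(2) fin \<open>y \<in> S\<close> by simp
    next
      case False
      then show ?thesis using m(1) by simp
    qed
  qed
qed

lemma biosphere_finite_below_children_of_finite_progeny:
  assumes "infinite_biosphere E t" "finite N"
  shows "finite {w. \<exists>x\<in>N. \<exists>y. E x y \<and> finite {u. descendant E y u} \<and> (y = w \<or> descendant E y w)}"
proof -
  have "finite {y. E x y}" for x
    using assms(1) unfolding infinite_biosphere_def by blast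
  then have "finite (\<Union>x\<in>N. \<Union>y\<in>{y. E x y \<and> finite {u. descendant E y u}}. insert y {u. descendant E y u})"
    using assms(2) by (intro finite_UN_I) auto
  then show ?thesis by (rule finite_subset[rotated]) blast
qed

lemma upward_generic_idxI:
  assumes "\<And>C :: 'i::linorder \<Rightarrow> 'v set. mono C \<Longrightarrow> (\<And>\<alpha>. C \<alpha> \<in> T) \<Longrightarrow> (\<Union>\<alpha>. C \<alpha>) \<in> T"
  shows "upward_generic_idx TYPE('i) T"
  unfolding upward_generic_idx_def
proof (intro allI impI)
  fix C :: "'i \<Rightarrow> 'v set"
  assume "\<forall>\<alpha> \<beta>. \<alpha> < \<beta> \<longrightarrow> C \<alpha> \<subseteq> C \<beta>" "\<forall>\<alpha>. C \<alpha> \<noteq> {} \<and> C \<alpha> \<in> T"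
  moreover from this(1) have "mono C" unfolding mono_def by (metis order.order_iff_strict order.refl)
  ultimately show "(\<Union>\<alpha>. C \<alpha>) \<in> T" using assms by blast
qed

lemma mono_le_max:
  fixes f :: "'a::linorder \<Rightarrow> 'b::order"
  assumes "mono f"
  shows "f a \<le> f (max a b)" and "f b \<le> f (max a b)"
  using assms by (simp_all add: monoD)

lemma CONV_between:
  "S \<in> CONV E \<Longrightarrow> a \<in> S \<Longrightarrow> d \<in> S \<Longrightarrow> descendant E a v \<Longrightarrow> descendant E v d \<Longrightarrow> v \<in> S"
  unfolding CONV_def by blast

lemma CONV_Union_chain:
  fixes C :: "'i::linorder \<Rightarrow> 'v set"
  assumes chain: "mono C" and conv: "\<And>\<alpha>. C \<alpha> \<in> CONV E"
  shows "(\<Union>\<alpha>. C \<alpha>) \<in> CONV E"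
  unfolding CONV_def
proof (intro CollectI allI impI)
  fix v
  assume "(\<exists>a\<in>\<Union>(range C). descendant E a v) \<and> (\<exists>d\<in>\<Union>(range C). descendant E v d)"
  then obtain a d \<alpha> \<beta> where "a \<in> C \<alpha>" "d \<in> C \<beta>" "descendant E a v" "descendant E v d"
    by blast
  then have "v \<in> C (max \<alpha> \<beta>)"
    using CONV_between[OF conv] mono_le_max[OF chain] by blast
  then show "v \<in> \<Union>(range C)" by blast
qed

lemma REF_infinite_descendants:
  "S \<in> REF E \<Longrightarrow> v \<in> S \<Longrightarrow> infinite {w. descendant E v w} \<Longrightarrow> infinite {w \<in> S. descendant E v w}"
  unfolding REF_def by blast

lemma REF_Union:
  assumes "\<And>S. S \<in> F \<Longrightarrow> S \<in> REF E"
  shows "\<Union>F \<in> REF E"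
  unfolding REF_def
proof (intro CollectI ballI impI)
  fix v
  assume "v \<in> \<Union>F" and infinite: "infinite {w. descendant E v w}"
  then obtain S where "S \<in> F" "v \<in> S" by blast
  have "infinite {w \<in> S. descendant E v w}"
    using REF_infinite_descendants[OF assms[OF \<open>S \<in> F\<close>] \<open>v \<in> S\<close> infinite] .
  moreover from \<open>S \<in> F\<close> have "{w \<in> S. descendant E v w} \<subseteq> {w \<in> \<Union>F. descendant E v w}" by blast
  ultimately show "infinite {w \<in> \<Union>F. descendant E v w}" using infinite_super by blast
qed

lemma biosphere_chain_eventual_root:
  fixes C :: "'i::linorder \<Rightarrow> 'v set"
  assumes bio: "infinite_biosphere E t" and chain: "mono C" and ca: "\<And>\<alpha>. C \<alpha> \<in> CA E"
  obtains r \<gamma> where "\<And>\<delta>. \<gamma> \<le> \<delta> \<Longrightarrow> is_root E (C \<delta>) r"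
proof -
  let ?R = "{r. \<exists>\<alpha>. is_root E (C \<alpha>) r}"
  obtain r0 where "r0 \<in> ?R" using ca[of undefined] unfolding CA_iff_ex_root by blast
  then obtain r where "r \<in> ?R" and min: "\<And>s. s \<in> ?R \<Longrightarrow> t r \<le> t s"
    by (rule biosphere_obtain_t_minimal[OF bio]) blast
  then obtain \<gamma> where "is_root E (C \<gamma>) r" by blast
  have "is_root E (C \<delta>) r" if "\<gamma> \<le> \<delta>" for \<delta>
  proof -
    have "r \<in> C \<delta>"
      using is_root_mem[OF \<open>is_root E (C \<gamma>) r\<close>] monoD[OF chain that] by blast
    obtain s where s: "is_root E (C \<delta>) s" using ca[of \<delta>] unfolding CA_iff_ex_root by blast
    have "s = r"
    proof (rule ccontr)
      assume "s \<noteq> r"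
      then have "descendant E s r" using is_root_descendant[OF s \<open>r \<in> C \<delta>\<close>] by simp
      then have "t s < t r" by (rule biosphere_descendant_less[OF bio])
      with min[of s] s show False by auto
    qed
    then show ?thesis using s by simp
  qed
  then show ?thesis using that by blast
qed

lemma is_root_Union_chain:
  fixes C :: "'i::linorder \<Rightarrow> 'v set"
  assumes chain: "mono C" and root: "\<And>\<delta>. \<gamma> \<le> \<delta> \<Longrightarrow> is_root E (C \<delta>) r"
  shows "is_root E (\<Union>\<alpha>. C \<alpha>) r"
  unfolding is_root_def
proof (intro conjI ballI impI)
  show "r \<in> \<Union>(range C)" using is_root_mem[OF root[OF order_refl]] by blast
next
  fix w
  assume "w \<in> \<Union>(range C)" "w \<noteq> r"
  then obtain \<beta> where "w \<in> C (max \<beta> \<gamma>)" using mono_le_max[OF chain] by blast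
  then show "descendant E r w" using is_root_descendant[OF root[of "max \<beta> \<gamma>"]] \<open>w \<noteq> r\<close> by simp
qed

lemma CA_Union_chain:
  fixes C :: "'i::linorder \<Rightarrow> 'v set"
  assumes "infinite_biosphere E t" "mono C" "\<And>\<alpha>. C \<alpha> \<in> CA E"
  shows "(\<Union>\<alpha>. C \<alpha>) \<in> CA E"
  using biosphere_chain_eventual_root[OF assms] is_root_Union_chain[OF assms(2)]
  unfolding CA_iff_ex_root by metis

lemma IAP_REF_cofinite_descendants:
  assumes "S \<in> IAP E" "S \<in> REF E" "v \<in> S" "infinite {w. descendant E v w}"
  shows "finite {w \<in> S. \<not> descendant E v w}"
  using assms unfolding IAP_def REF_def by blast

context
  fixes E :: "'v \<Rightarrow> 'v \<Rightarrow> bool" and C :: "'i::linorder \<Rightarrow> 'v set" and g :: 'i and r :: 'v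
  assumes chain: "mono C"
    and iap: "\<And>\<alpha>. C \<alpha> \<in> IAP E" and conv: "\<And>\<alpha>. C \<alpha> \<in> CONV E" and ref: "\<And>\<alpha>. C \<alpha> \<in> REF E"
    and root: "\<And>\<delta>. g \<le> \<delta> \<Longrightarrow> is_root E (C \<delta>) r"
    and infinite_base: "infinite (C g)"
begin

lemma chain_base_contains_infinite_progeny:
  assumes "x \<in> C \<delta>" "infinite {w. descendant E x w}"
  shows "x \<in> C g"
proof -
  define d where "d = max \<delta> g"
  have "x \<in> C d" "C g \<subseteq> C d" using assms(1) mono_le_max[OF chain] unfolding d_def by blast+
  have root_d: "is_root E (C d) r" using root unfolding d_def by simp
  have "finite {w \<in> C d. \<not> descendant E x w}"
    using IAP_REF_cofinite_descendants[OF iap ref \<open>x \<in> C d\<close> assms(2)] .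
  moreover have "C g \<subseteq> {w \<in> C d. \<not> descendant E x w} \<union> {w \<in> C g. descendant E x w}"
    using \<open>C g \<subseteq> C d\<close> by blast
  ultimately have "infinite {w \<in> C g. descendant E x w}"
    using infinite_base by (meson finite_UnI finite_subset)
  then obtain y where "y \<in> C g" "descendant E x y" using infinite_imp_nonempty by blast
  have "r \<in> C g" using is_root_mem[OF root[OF order_refl]] .
  show "x \<in> C g"
  proof (cases "x = r")
    case True
    then show ?thesis using \<open>r \<in> C g\<close> by simp
  next
    case False
    then have "descendant E r x" using is_root_descendant[OF root_d \<open>x \<in> C d\<close>] by simp
    then show ?thesis using CONV_between[OF conv \<open>r \<in> C g\<close> \<open>y \<in> C g\<close>] \<open>descendant E x y\<close> by blast
  qed
qed

lemma chain_escape_through_child_of_finite_progeny: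
  assumes "w \<in> C \<beta>" "w \<notin> C g"
  obtains x y where "x \<in> C g" "E x y" "finite {u. descendant E y u}" "y = w \<or> descendant E y w"
proof -
  define d where "d = max \<beta> g"
  have "w \<in> C d" "C g \<subseteq> C d" using assms(1) mono_le_max[OF chain] unfolding d_def by blast+
  have root_d: "is_root E (C d) r" using root unfolding d_def by simp
  have "r \<in> C g" using is_root_mem[OF root[OF order_refl]] .
  then have "descendant E r w" using is_root_descendant[OF root_d \<open>w \<in> C d\<close>] assms(2) by blast
  then obtain x y where xy: "x \<in> C g" "y \<notin> C g" "E x y" "y = w \<or> descendant E y w"
    using descendant_exits_set[OF _ \<open>r \<in> C g\<close> assms(2)] by blast
  have "y \<in> C d"
    using xy(4)
  proof
    assume "descendant E y w"
    moreover have "x \<in> C d" using xy(1) \<open>C g \<subseteq> C d\<close> by blast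
    ultimately show ?thesis
      using CONV_between[OF conv _ \<open>w \<in> C d\<close>] descendant_if_edge[of E x y, OF xy(3)] by blast
  qed (use \<open>w \<in> C d\<close> in simp)
  then have "finite {u. descendant E y u}" using chain_base_contains_infinite_progeny xy(2) by blast
  then show ?thesis using that xy(1,3,4) by blast
qed

lemma chain_Union_non_descendants_finite:
  assumes bio: "infinite_biosphere E t" and N: "finite {w \<in> C g. \<not> descendant E v w}"
  shows "finite {w \<in> \<Union>(range C). \<not> descendant E v w}"
proof -
  let ?F = "{w. \<exists>x\<in>{w \<in> C g. \<not> descendant E v w}. \<exists>y. E x y \<and> finite {u. descendant E y u}
                \<and> (y = w \<or> descendant E y w)}"
  have "{w \<in> \<Union>(range C). \<not> descendant E v w} \<subseteq> {w \<in> C g. \<not> descendant E v w} \<union> ?F"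
  proof
    fix w
    assume w: "w \<in> {w \<in> \<Union>(range C). \<not> descendant E v w}"
    then obtain \<beta> where "w \<in> C \<beta>" by blast
    show "w \<in> {w \<in> C g. \<not> descendant E v w} \<union> ?F"
    proof (cases "w \<in> C g")
      case False
      then obtain x y where xy: "x \<in> C g" "E x y" "finite {u. descendant E y u}" "y = w \<or> descendant E y w"
        using chain_escape_through_child_of_finite_progeny[OF \<open>w \<in> C \<beta>\<close>] by blast
      have "descendant E x w" using descendant_edge_trans[OF xy(2,4)] .
      then have "\<not> descendant E v x" using w descendant_trans[of E v x w] by blast
      then show ?thesis using xy by (intro UnI2) blast
    next
      case True
      then show ?thesis using w by (intro UnI1) blast
    qed
  qed
  moreover have "finite ?F" using biosphere_finite_below_children_of_finite_progeny[OF bio N] .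
  ultimately show ?thesis using N by (meson finite_UnI finite_subset)
qed

end

lemma IAP_Union_chain:
  fixes C :: "'i::linorder \<Rightarrow> 'v set"
  assumes bio: "infinite_biosphere E t" and chain: "mono C"
    and iap: "\<And>\<alpha>. C \<alpha> \<in> IAP E" and conv: "\<And>\<alpha>. C \<alpha> \<in> CONV E"
    and ca: "\<And>\<alpha>. C \<alpha> \<in> CA E" and ref: "\<And>\<alpha>. C \<alpha> \<in> REF E"
  shows "(\<Union>\<alpha>. C \<alpha>) \<in> IAP E"
  unfolding IAP_def
proof (intro CollectI notI)
  assume "\<exists>v\<in>\<Union>(range C). infinite {w \<in> \<Union>(range C). descendant E v w}
                          \<and> infinite {w \<in> \<Union>(range C). \<not> descendant E v w}"
  then obtain v \<alpha> where "v \<in> C \<alpha>" and D: "infinite {w \<in> \<Union>(range C). descendant E v w}"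
    and N: "infinite {w \<in> \<Union>(range C). \<not> descendant E v w}" by blast
  obtain r \<gamma> where root: "\<And>\<delta>. \<gamma> \<le> \<delta> \<Longrightarrow> is_root E (C \<delta>) r"
    using biosphere_chain_eventual_root[OF bio chain ca] by blast
  define g where "g = max \<gamma> \<alpha>"
  have root_g: "\<And>\<delta>. g \<le> \<delta> \<Longrightarrow> is_root E (C \<delta>) r" using root unfolding g_def by simp
  have "v \<in> C g" using \<open>v \<in> C \<alpha>\<close> mono_le_max[OF chain] unfolding g_def by blast
  moreover have "infinite {w. descendant E v w}" using D by (rule infinite_super[rotated]) blast
  ultimately have "finite {w \<in> C g. \<not> descendant E v w}"
    and "infinite {w \<in> C g. descendant E v w}"
    using IAP_REF_cofinite_descendants[OF iap ref] REF_infinite_descendants[OF ref] by blast+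
  moreover from this(2) have "infinite (C g)" by (rule infinite_super[rotated]) blast
  ultimately have "finite {w \<in> \<Union>(range C). \<not> descendant E v w}"
    using chain_Union_non_descendants_finite[OF chain iap conv ref root_g _ bio] by blast
  with N show False by contradiction
qed

theorem mainTheorem5:
  fixes E :: "'v \<Rightarrow> 'v \<Rightarrow> bool" and t :: "'v \<Rightarrow> real"
  assumes "infinite_biosphere E t"
  shows "upward_generic_idx TYPE('i::linorder) (CONV E)
         \<and> upward_generic_idx TYPE('i::linorder) (CA E)
         \<and> upward_generic_idx TYPE('i::linorder) (REF E)
         \<and> upward_generic_idx TYPE('i::linorder) (IAP E \<inter> CONV E \<inter> CA E \<inter> REF E)"
proof (intro conjI upward_generic_idxI)
  fix C :: "'i \<Rightarrow> 'v set"
  assume chain: "mono C"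
  show "(\<Union>\<alpha>. C \<alpha>) \<in> CONV E" if "\<And>\<alpha>. C \<alpha> \<in> CONV E"
    using CONV_Union_chain[OF chain that] .
  show "(\<Union>\<alpha>. C \<alpha>) \<in> CA E" if "\<And>\<alpha>. C \<alpha> \<in> CA E"
    using CA_Union_chain[OF assms chain that] .
  show "(\<Union>\<alpha>. C \<alpha>) \<in> REF E" if "\<And>\<alpha>. C \<alpha> \<in> REF E"
    using REF_Union[of "range C"] that by blast
  show "(\<Union>\<alpha>. C \<alpha>) \<in> IAP E \<inter> CONV E \<inter> CA E \<inter> REF E"
    if "\<And>\<alpha>. C \<alpha> \<in> IAP E \<inter> CONV E \<inter> CA E \<inter> REF E"
  proof -
    have iap: "\<And>\<alpha>. C \<alpha> \<in> IAP E" and conv: "\<And>\<alpha>. C \<alpha> \<in> CONV E"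
      and ca: "\<And>\<alpha>. C \<alpha> \<in> CA E" and ref: "\<And>\<alpha>. C \<alpha> \<in> REF E"
      using that by blast+
    show ?thesis
      using IAP_Union_chain[OF assms chain iap conv ca ref] CONV_Union_chain[OF chain conv]
        CA_Union_chain[OF assms chain ca] REF_Union[of "range C" E] ref by blast
  qed
qed

end
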